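(* Let $\mathcal A$ be a non-associative algebra. If there exists a qualitative representation $\phi$ of $\mathcal A$ such that for all $a,b,c,d\in A$ $$(a^\phi\circ b^\phi)\cap(c^\phi\circ d^\phi)=\varnothing\iff (a;b)\cdot(c;d)=0,$$ then $\mathcal A$ is associative, i.e. $(a;b);c=a;(b;c)$ for all $a,b,c\in A$.
   Context: A non-associative algebra is an algebra $(A,0,1,+,-,1',\breve{\ },;)$ such that $(A,0,1,+,-)$ is a boolean algebra (with $x\cdot y=-(-x+-y)$ and $x\le y\iff x+y=y$); $1';x=x=x;1'$, $\breve{\breve x}=x$, $(x;y)\breve{}=\breve y;\breve x$; $\breve 0=x;0=0$, $(x+y)\breve{}=\breve x+\breve y$, $x;(y+z)=x;y+x;z$; and the Peircean law holds: $x;y\cdot\breve z=0$ iff $y;z\cdot\breve x=0$. For binary relations, $r\circ s=\{(x,y):\exists z\,(x,z)\in r,(z,y)\in s\}$, $\breve r=\{(y,x):(x,y)\in r\}$, $\mathrm{Id}_D=\{(x,x):x\in D\}$. A qualitative representation of $\mathcal A$ over base $D$ is an injective map $\phi:A\to\wp(D\times D)$ such that $0^\phi=\varnothing$, $1^\phi=D\times D$, $(1')^\phi=\mathrm{Id}_D$, $(a+b)^\phi=a^\phi\cup b^\phi$, $(-a)^\phi=(D\times D)\setminus a^\phi$, $(\breve a)^\phi=(a^\phi)\breve{}$, and for all $a,b,c\in A$: $c^\phi\supseteq a^\phi\circ b^\phi\iff c\ge a;b$. *)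

theory Defs
  imports Main
begin

text \<open>A non-associative algebra (A,0,1,+,-,1',conv,;) whose universe is the whole type 'a.
  Meet is defined by x . y = -(-x + -y), and x \<le> y iff x + y = y.\<close>

definition ba_meet :: "('a \<Rightarrow> 'a \<Rightarrow> 'a) \<Rightarrow> ('a \<Rightarrow> 'a) \<Rightarrow> 'a \<Rightarrow> 'a \<Rightarrow> 'a" where
  "ba_meet pl cm x y = cm (pl (cm x) (cm y))"

definition boolean_alg :: "'a \<Rightarrow> 'a \<Rightarrow> ('a \<Rightarrow> 'a \<Rightarrow> 'a) \<Rightarrow> ('a \<Rightarrow> 'a) \<Rightarrow> bool" where
  "boolean_alg z u pl cm \<longleftrightarrow>
     (let mt = ba_meet pl cm in
     (\<forall>x y. pl x y = pl y x) \<and> (\<forall>x y. mt x y = mt y x) \<and>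
     (\<forall>x y w. pl x (pl y w) = pl (pl x y) w) \<and> (\<forall>x y w. mt x (mt y w) = mt (mt x y) w) \<and>
     (\<forall>x y. pl x (mt x y) = x) \<and> (\<forall>x y. mt x (pl x y) = x) \<and>
     (\<forall>x y w. mt x (pl y w) = pl (mt x y) (mt x w)) \<and>
     (\<forall>x y w. pl x (mt y w) = mt (pl x y) (pl x w)) \<and>
     (\<forall>x. pl x z = x) \<and> (\<forall>x. mt x u = x) \<and>
     (\<forall>x. pl x (cm x) = u) \<and> (\<forall>x. mt x (cm x) = z))"

definition nonassoc_algebra ::
  "'a \<Rightarrow> 'a \<Rightarrow> ('a \<Rightarrow> 'a \<Rightarrow> 'a) \<Rightarrow> ('a \<Rightarrow> 'a) \<Rightarrow> 'a \<Rightarrow> ('a \<Rightarrow> 'a) \<Rightarrow> ('a \<Rightarrow> 'a \<Rightarrow> 'a) \<Rightarrow> bool" where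
  "nonassoc_algebra z u pl cm e cv cp \<longleftrightarrow>
     boolean_alg z u pl cm \<and>
     (\<forall>x. cp e x = x \<and> cp x e = x) \<and>
     (\<forall>x. cv (cv x) = x) \<and>
     (\<forall>x y. cv (cp x y) = cp (cv y) (cv x)) \<and>
     cv z = z \<and> (\<forall>x. cp x z = z) \<and>
     (\<forall>x y. cv (pl x y) = pl (cv x) (cv y)) \<and>
     (\<forall>x y w. cp x (pl y w) = pl (cp x y) (cp x w)) \<and>
     (\<forall>x y w. ba_meet pl cm (cp x y) (cv w) = z \<longleftrightarrow> ba_meet pl cm (cp y w) (cv x) = z)"

definition qual_rep ::
  "'a \<Rightarrow> 'a \<Rightarrow> ('a \<Rightarrow> 'a \<Rightarrow> 'a) \<Rightarrow> ('a \<Rightarrow> 'a) \<Rightarrow> 'a \<Rightarrow> ('a \<Rightarrow> 'a) \<Rightarrow> ('a \<Rightarrow> 'a \<Rightarrow> 'a)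
    \<Rightarrow> 'b set \<Rightarrow> ('a \<Rightarrow> ('b \<times> 'b) set) \<Rightarrow> bool" where
  "qual_rep z u pl cm e cv cp D \<phi> \<longleftrightarrow>
     inj \<phi> \<and> \<phi> z = {} \<and> \<phi> u = D \<times> D \<and> \<phi> e = Id_on D \<and>
     (\<forall>a b. \<phi> (pl a b) = \<phi> a \<union> \<phi> b) \<and>
     (\<forall>a. \<phi> (cm a) = (D \<times> D) - \<phi> a) \<and>
     (\<forall>a. \<phi> (cv a) = converse (\<phi> a)) \<and>
     (\<forall>a b c. \<phi> a O \<phi> b \<subseteq> \<phi> c \<longleftrightarrow> pl c (cp a b) = c)"

end

theory Submission
  imports Defs
begin

text \<open>If a composite \<open>a;b\<close> followed by \<open>c\<close> leaves the relation \<open>\<phi> r\<close> at some pair \<open>(x,t)\<close> with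
  midpoint \<open>y\<close>, then \<open>(x,y)\<close> lies in both \<open>\<phi>(a;b)\<close> and \<open>\<phi>(-r;c\<breve>)\<close>. Whenever
  \<open>\<phi> a \<circ> \<phi> b \<circ> \<phi> c \<subseteq> \<phi> r\<close>, the relations \<open>\<phi> a \<circ> \<phi> b\<close> and \<open>\<phi>(-r) \<circ> \<phi> c\<breve>\<close> are
  disjoint, so the hypothesis forces \<open>(a;b)\<cdot>(-r;c\<breve>) = 0\<close>, a contradiction. Hence
  \<open>(a;b);c \<le> r\<close>; taking \<open>r = a;(b;c)\<close> and arguing symmetrically gives associativity.\<close>

locale qualitative_representation =
  fixes z u :: 'a and pl cp :: "'a \<Rightarrow> 'a \<Rightarrow> 'a" and cm cv :: "'a \<Rightarrow> 'a" and e :: 'a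
    and D :: "'b set" and \<phi> :: "'a \<Rightarrow> ('b \<times> 'b) set"
  assumes boolean: "boolean_alg z u pl cm"
    and rep: "qual_rep z u pl cm e cv cp D \<phi>"
begin

lemma rep_zero: "\<phi> z = {}"
  and rep_join: "\<phi> (pl a b) = \<phi> a \<union> \<phi> b"
  and rep_compl: "\<phi> (cm a) = D \<times> D - \<phi> a"
  and rep_conv: "\<phi> (cv a) = converse (\<phi> a)"
  and rep_relcomp_le: "\<phi> a O \<phi> b \<subseteq> \<phi> c \<longleftrightarrow> pl c (cp a b) = c"
  using rep unfolding qual_rep_def by auto

lemma rep_eqD: "\<phi> a = \<phi> b \<Longrightarrow> a = b"
  using rep unfolding qual_rep_def by (auto dest: injD)

lemma rep_subset_square: "\<phi> a \<subseteq> D \<times> D"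
proof -
  have "pl a (cm a) = u" and "\<phi> u = D \<times> D"
    using boolean rep unfolding boolean_alg_def qual_rep_def Let_def by auto
  then show ?thesis
    using rep_join by blast
qed

lemma rep_meet: "\<phi> (ba_meet pl cm a b) = \<phi> a \<inter> \<phi> b"
  using rep_subset_square[of a] rep_subset_square[of b]
  unfolding ba_meet_def by (auto simp: rep_compl rep_join)

lemma join_eq_iff_rep_subset: "pl c a = c \<longleftrightarrow> \<phi> a \<subseteq> \<phi> c"
  by (metis Un_absorb2 Un_upper2 rep_eqD rep_join)

lemma relcomp_subset_iff: "\<phi> a O \<phi> b \<subseteq> \<phi> c \<longleftrightarrow> \<phi> (cp a b) \<subseteq> \<phi> c"
  by (simp add: rep_relcomp_le join_eq_iff_rep_subset)

lemma relcomp_subset: "\<phi> a O \<phi> b \<subseteq> \<phi> (cp a b)"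
  by (simp add: relcomp_subset_iff)

lemma relcomp3_subset_left: "\<phi> a O \<phi> b O \<phi> c \<subseteq> \<phi> (cp (cp a b) c)"
  using relcomp_mono[OF relcomp_subset[of a b] order_refl[of "\<phi> c"]] relcomp_subset[of "cp a b" c]
  by (simp add: O_assoc[symmetric])

lemma relcomp3_subset_right: "\<phi> a O \<phi> b O \<phi> c \<subseteq> \<phi> (cp a (cp b c))"
  using relcomp_mono[OF order_refl[of "\<phi> a"] relcomp_subset[of b c]] relcomp_subset[of a "cp b c"]
  by simp

end

locale disjointness_reflecting_representation = qualitative_representation +
  assumes reflects_disjoint:
    "\<And>a b c d. (\<phi> a O \<phi> b) \<inter> (\<phi> c O \<phi> d) = {} \<Longrightarrow> ba_meet pl cm (cp a b) (cp c d) = z"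
begin

lemma products_disjoint: "(\<phi> a O \<phi> b) \<inter> (\<phi> c O \<phi> d) = {} \<Longrightarrow> \<phi> (cp a b) \<inter> \<phi> (cp c d) = {}"
  using reflects_disjoint rep_meet rep_zero by metis

lemma assoc_left_le:
  assumes r: "\<phi> a O \<phi> b O \<phi> c \<subseteq> \<phi> r"
  shows "\<phi> (cp (cp a b) c) \<subseteq> \<phi> r"
  unfolding relcomp_subset_iff[symmetric]
proof
  fix p assume "p \<in> \<phi> (cp a b) O \<phi> c"
  then obtain x y t where p: "p = (x, t)" and xy: "(x, y) \<in> \<phi> (cp a b)" and yt: "(y, t) \<in> \<phi> c"
    by blast
  show "p \<in> \<phi> r"
  proof (rule ccontr)
    assume "p \<notin> \<phi> r"
    then have "(x, t) \<in> \<phi> (cm r)"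
      using p xy yt rep_subset_square by (auto simp: rep_compl)
    with yt have "(x, y) \<in> \<phi> (cm r) O \<phi> (cv c)"
      by (auto simp: rep_conv)
    moreover have "(\<phi> a O \<phi> b) \<inter> (\<phi> (cm r) O \<phi> (cv c)) = {}"
      using r by (fastforce simp: rep_compl rep_conv)
    ultimately show False
      using xy products_disjoint relcomp_subset by blast
  qed
qed

lemma assoc_right_le:
  assumes r: "\<phi> a O \<phi> b O \<phi> c \<subseteq> \<phi> r"
  shows "\<phi> (cp a (cp b c)) \<subseteq> \<phi> r"
  unfolding relcomp_subset_iff[symmetric]
proof
  fix p assume "p \<in> \<phi> a O \<phi> (cp b c)"
  then obtain x y t where p: "p = (x, t)" and xy: "(x, y) \<in> \<phi> a" and yt: "(y, t) \<in> \<phi> (cp b c)"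
    by blast
  show "p \<in> \<phi> r"
  proof (rule ccontr)
    assume "p \<notin> \<phi> r"
    then have "(x, t) \<in> \<phi> (cm r)"
      using p xy yt rep_subset_square by (auto simp: rep_compl)
    with xy have "(y, t) \<in> \<phi> (cv a) O \<phi> (cm r)"
      by (auto simp: rep_conv)
    moreover have "(\<phi> b O \<phi> c) \<inter> (\<phi> (cv a) O \<phi> (cm r)) = {}"
      using r by (fastforce simp: rep_compl rep_conv)
    ultimately show False
      using yt products_disjoint relcomp_subset by blast
  qed
qed

lemma comp_assoc: "cp (cp a b) c = cp a (cp b c)"
  using assoc_left_le[OF relcomp3_subset_right] assoc_right_le[OF relcomp3_subset_left]
  by (intro rep_eqD) blast

end

theorem mainTheorem4:
  fixes z u :: 'a and pl cp :: "'a \<Rightarrow> 'a \<Rightarrow> 'a" and cm cv :: "'a \<Rightarrow> 'a" and e :: 'a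
  assumes "nonassoc_algebra z u pl cm e cv cp"
    and "\<exists>(D :: 'b set) \<phi>. qual_rep z u pl cm e cv cp D \<phi> \<and>
           (\<forall>a b c d. (\<phi> a O \<phi> b) \<inter> (\<phi> c O \<phi> d) = {} \<longleftrightarrow>
                       ba_meet pl cm (cp a b) (cp c d) = z)"
  shows "\<forall>a b c. cp (cp a b) c = cp a (cp b c)"
proof -
  obtain D :: "'b set" and \<phi> where rep: "qual_rep z u pl cm e cv cp D \<phi>"
    and disj: "\<forall>a b c d. (\<phi> a O \<phi> b) \<inter> (\<phi> c O \<phi> d) = {} \<longleftrightarrow> ba_meet pl cm (cp a b) (cp c d) = z"
    using assms(2) by blast
  have "boolean_alg z u pl cm"
    using assms(1) unfolding nonassoc_algebra_def by blast
  with rep disj interpret disjointness_reflecting_representation z u pl cp cm cv e D \<phi>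
    by unfold_locales blast+
  show ?thesis
    using comp_assoc by blast
qed

end
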